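(* Let $n\ge4$, $x_1,\dots,x_{n-1}>0$, $\gamma,\delta>0$ with $\gamma\ne1\ne\delta$, $x_0=1$, and let $\mathbf{P}$ be the $n\times n$ matrix with entries $p_{ij}=x_{j-1}/x_{i-1}$ except $p_{12}=\delta x_1$, $p_{21}=1/(\delta x_1)$, $p_{13}=\gamma x_2$, $p_{31}=1/(\gamma x_2)$. Let $\mathbf{w}^{EM}$ be the principal right eigenvector of $\mathbf{P}$. If $\gamma,\delta<1$, then $w_1^{EM}/w_i^{EM}<x_{i-1}$ for $i=4,\dots,n$.
   Context: The principal right eigenvector is the positive (Perron) eigenvector belonging to the largest eigenvalue. *)

theory Defs
  imports Complex_Main
begin

text \<open>Matrices are n x n, indexed by 1..n, as functions nat => nat => real.\<close>

definition EM_matrix :: "(nat \<Rightarrow> real) \<Rightarrow> real \<Rightarrow> real \<Rightarrow> nat \<Rightarrow> nat \<Rightarrow> real" where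
  "EM_matrix x \<gamma> \<delta> i j =
     (let xx = (\<lambda>k. if k = 0 then 1 else x k) in
      if i = 1 \<and> j = 2 then \<delta> * x 1
      else if i = 2 \<and> j = 1 then 1 / (\<delta> * x 1)
      else if i = 1 \<and> j = 3 then \<gamma> * x 2
      else if i = 3 \<and> j = 1 then 1 / (\<gamma> * x 2)
      else xx (j - 1) / xx (i - 1))"

definition is_eigenvalue :: "nat \<Rightarrow> (nat \<Rightarrow> nat \<Rightarrow> real) \<Rightarrow> complex \<Rightarrow> bool" where
  "is_eigenvalue n A \<mu> \<longleftrightarrow>
     (\<exists>v :: nat \<Rightarrow> complex. (\<exists>i\<in>{1..n}. v i \<noteq> 0) \<and>
        (\<forall>i\<in>{1..n}. (\<Sum>j=1..n. complex_of_real (A i j) * v j) = \<mu> * v i))"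

definition principal_right_eigenvector :: "nat \<Rightarrow> (nat \<Rightarrow> nat \<Rightarrow> real) \<Rightarrow> (nat \<Rightarrow> real) \<Rightarrow> bool" where
  "principal_right_eigenvector n A w \<longleftrightarrow>
     (\<forall>i\<in>{1..n}. w i > 0) \<and>
     (\<exists>r::real. (\<forall>i\<in>{1..n}. (\<Sum>j=1..n. A i j * w j) = r * w i) \<and>
        (\<forall>\<mu>. is_eigenvalue n A \<mu> \<longrightarrow> cmod \<mu> \<le> r))"

end

theory Submission
  imports Defs
begin

text \<open>Write \<open>S = \<Sum>\<^sub>j x\<^sub>j\<^sub>-\<^sub>1 w\<^sub>j\<close>. Every row \<open>i \<ge> 4\<close> of \<open>P\<close> is unperturbed,
  so \<open>(P w)\<^sub>i = S / x\<^sub>i\<^sub>-\<^sub>1\<close>, whereas the first row is lowered by the perturbations: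
  \<open>(P w)\<^sub>1 = S + (\<delta> - 1) x\<^sub>1 w\<^sub>2 + (\<gamma> - 1) x\<^sub>2 w\<^sub>3 < S\<close>. From \<open>P w = r w\<close> we get
  \<open>r w\<^sub>1 < S = r x\<^sub>i\<^sub>-\<^sub>1 w\<^sub>i\<close>.\<close>

definition x_ext :: "(nat \<Rightarrow> real) \<Rightarrow> nat \<Rightarrow> real" where
  "x_ext x k = (if k = 0 then 1 else x k)"

lemma x_ext_pos:
  assumes "\<forall>k\<in>{1..n-1}. x k > 0" and "j \<in> {1..n}"
  shows "x_ext x (j - 1) > 0"
proof (cases "j = 1")
  case False
  with assms(2) have "j - 1 \<in> {1..n-1}" by auto
  with assms(1) False show ?thesis by (simp add: x_ext_def)
qed (simp add: x_ext_def)

lemma EM_matrix_row_sum_ge4: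
  fixes i n :: nat and x :: "nat \<Rightarrow> real" and \<gamma> \<delta> :: real and w :: "nat \<Rightarrow> real"
  assumes "4 \<le> i"
  shows "(\<Sum>j=1..n. EM_matrix x \<gamma> \<delta> i j * w j) = (\<Sum>j=1..n. x_ext x (j - 1) * w j) / x (i - 1)"
  unfolding sum_divide_distrib
  using assms by (intro sum.cong) (auto simp: EM_matrix_def x_ext_def Let_def)

lemma EM_matrix_row_sum_1:
  fixes n :: nat and x :: "nat \<Rightarrow> real" and \<gamma> \<delta> :: real and w :: "nat \<Rightarrow> real"
  assumes "3 \<le> n"
  shows "(\<Sum>j=1..n. EM_matrix x \<gamma> \<delta> 1 j * w j)
    = (\<Sum>j=1..n. x_ext x (j - 1) * w j) + (\<delta> - 1) * x 1 * w 2 + (\<gamma> - 1) * x 2 * w 3"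
proof -
  have "EM_matrix x \<gamma> \<delta> 1 j * w j = x_ext x (j - 1) * w j
      + (if j = 2 then (\<delta> - 1) * x 1 * w 2 else 0)
      + (if j = 3 then (\<gamma> - 1) * x 2 * w 3 else 0)" for j
    by (auto simp: EM_matrix_def x_ext_def Let_def algebra_simps)
  then show ?thesis
    using assms by (simp add: sum.distrib)
qed

lemma ratio_lt_of_eigen_rows:
  fixes r S c w1 wi :: real
  assumes "r * w1 < S" and "r * wi = S / c"
    and "S > 0" and "c > 0" and "wi > 0"
  shows "w1 / wi < c"
proof -
  have "r > 0"
    using assms(2-5) by (metis divide_pos_pos zero_less_mult_pos2)
  from assms(1,2,4) have "r * w1 < r * (c * wi)"
    by (simp add: field_simps)
  with \<open>r > 0\<close> have "w1 < c * wi" by simp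
  with assms(5) show ?thesis by (simp add: divide_less_eq)
qed

theorem mainTheorem8:
  fixes n :: nat and x :: "nat \<Rightarrow> real" and \<gamma> \<delta> :: real and w :: "nat \<Rightarrow> real"
  assumes "n \<ge> 4"
    and "\<forall>k\<in>{1..n-1}. x k > 0"
    and "\<gamma> > 0" and "\<delta> > 0" and "\<gamma> \<noteq> 1" and "\<delta> \<noteq> 1"
    and "principal_right_eigenvector n (EM_matrix x \<gamma> \<delta>) w"
    and "\<gamma> < 1" and "\<delta> < 1"
  shows "\<forall>i\<in>{4..n}. w 1 / w i < x (i - 1)"
proof
  fix i assume i: "i \<in> {4..n}"
  define S where "S = (\<Sum>j=1..n. x_ext x (j - 1) * w j)"
  from assms(7) obtain r where w_pos: "\<forall>j\<in>{1..n}. w j > 0"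
    and eigen: "\<forall>j\<in>{1..n}. (\<Sum>k=1..n. EM_matrix x \<gamma> \<delta> j k * w k) = r * w j"
    unfolding principal_right_eigenvector_def by blast
  have S_pos: "S > 0"
    unfolding S_def using w_pos x_ext_pos[OF assms(2)] assms(1) by (intro sum_pos) auto
  have "1 \<in> {1..n-1}" "2 \<in> {1..n-1}" "i - 1 \<in> {1..n-1}"
    using assms(1) i by auto
  then have x_pos: "x 1 > 0" "x 2 > 0" "x (i - 1) > 0"
    using assms(2) by blast+
  have "(\<delta> - 1) * x 1 * w 2 < 0" "(\<gamma> - 1) * x 2 * w 3 < 0"
    using assms(1,8,9) x_pos w_pos by (simp_all add: mult_neg_pos)
  moreover have "r * w 1 = S + (\<delta> - 1) * x 1 * w 2 + (\<gamma> - 1) * x 2 * w 3"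
    using eigen[rule_format, of 1] EM_matrix_row_sum_1[of n x \<gamma> \<delta> w] assms(1)
    by (simp add: S_def)
  ultimately have "r * w 1 < S" by linarith
  moreover have "r * w i = S / x (i - 1)"
    using eigen[rule_format, of i] EM_matrix_row_sum_ge4[where n = n and w = w] i
    by (simp add: S_def)
  ultimately show "w 1 / w i < x (i - 1)"
    using ratio_lt_of_eigen_rows S_pos x_pos(3) w_pos i by auto
qed

end
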